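(* There is an absolute constant $C>0$ such that the following holds. Let $n,k$ be positive integers, let $p_1,\dots,p_n\in[0,1]$, and let $X_1,\dots,X_n$ be independent indicator random variables with $\mathbb{E}[X_i]=p_i$. Then there exist $q_1,\dots,q_n\in[0,1]$ such that: (1) $|q_i-p_i|\le C/k$ for all $i$; (2) each $q_i$ is an integer multiple of $1/k$; (3) if $Y_1,\dots,Y_n$ are independent indicator random variables with $\mathbb{E}[Y_i]=q_i$, then $\left\|\sum_i X_i-\sum_i Y_i\right\|\le C k^{-1/2}$ and, for every $j\in[n]$, $\left\|\sum_{i\ne j}X_i-\sum_{i\ne j}Y_i\right\|\le Ck^{-1/2}$.
   Context: For integer-valued random variables $A,B$ (identified with their distributions), $\|A-B\|$ denotes the total variation distance $\frac12\sum_{a}|\Pr[A=a]-\Pr[B=a]|$. *)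

theory Defs
  imports "HOL-Probability.Probability"
begin

definition indicator_sum_pmf :: "(nat \<Rightarrow> real) \<Rightarrow> nat set \<Rightarrow> nat pmf" where
  "indicator_sum_pmf p I =
     map_pmf (\<lambda>x. \<Sum>i\<in>I. of_bool (x i)) (Pi_pmf I False (\<lambda>i. bernoulli_pmf (p i)))"

definition tv_dist :: "nat pmf \<Rightarrow> nat pmf \<Rightarrow> real" where
  "tv_dist A B = (1/2) * (\<Sum>\<^sub>\<infinity>a. \<bar>pmf A a - pmf B a\<bar>)"

end

theory Submission
  imports Defs "HOL-Computational_Algebra.Polynomial"
begin

(*
  The law of a sum of independent indicators with means p_i, i in I, has generating
  polynomial gen_poly p I = prod_i ((1 - p_i) + p_i X), and the total variation distance of
  two such laws is half the l1-norm of the coefficient vector of gen_poly p I - gen_poly q I.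
  Sort the p_i increasingly and round them along this order so that every partial sum of
  p - q over an interval of indices lies in [-1/k, 1/k] (the rounded values are the increments
  of floor(k * partial sums of p) / k).  Swapping the factors one at a time and summing by
  parts writes gen_poly p - gen_poly q as a boundary term plus terms E_m (q_m - p_(m+1)) D^2 R_m,
  where E_m are partial sums of p - q, D = X - 1, and R_m are products of Bernoulli factors.
  A smoothing estimate, obtained by comparing each factor with the binomial polynomial
  (1 + X)/2, bounds |D^2 R_m| by O(1/(1 + sum_t min(p_t, 1 - p_t))), while monotonicity of p
  bounds sum_m |q_m - p_(m+1)| by O(1 + sum_t min(p_t, 1 - p_t)).  Hence the distance is O(1/k);
  deleting one index only doubles the partial-sum bound.  This gives the theorem with C = 194.
*)

definition l1norm :: "real poly \<Rightarrow> real" where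
  "l1norm P = (\<Sum>i\<le>degree P. \<bar>coeff P i\<bar>)"

lemma l1norm_eq: "degree P < N \<Longrightarrow> l1norm P = (\<Sum>i<N. \<bar>coeff P i\<bar>)"
  unfolding l1norm_def by (intro sum.mono_neutral_left) (auto simp: coeff_eq_0)

lemma l1norm_nonneg: "l1norm P \<ge> 0"
  unfolding l1norm_def by (intro sum_nonneg) auto

lemma l1norm_0 [simp]: "l1norm 0 = 0"
  by (simp add: l1norm_def)

lemma l1norm_1 [simp]: "l1norm 1 = 1"
  by (simp add: l1norm_def)

lemma l1norm_pCons: "l1norm (pCons a P) = \<bar>a\<bar> + l1norm P"
proof -
  have "degree (pCons a P) < Suc (Suc (degree P))"
    using degree_pCons_le[of a P] by linarith
  then have "l1norm (pCons a P) = (\<Sum>i<Suc (Suc (degree P)). \<bar>coeff (pCons a P) i\<bar>)"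
    by (rule l1norm_eq)
  also have "\<dots> = \<bar>a\<bar> + (\<Sum>i<Suc (degree P). \<bar>coeff P i\<bar>)"
    by (subst sum.lessThan_Suc_shift) simp
  also have "(\<Sum>i<Suc (degree P). \<bar>coeff P i\<bar>) = l1norm P"
    by (rule l1norm_eq[symmetric]) simp
  finally show ?thesis .
qed

lemma l1norm_add: "l1norm (P + Q) \<le> l1norm P + l1norm Q"
proof -
  define N where "N = Suc (max (degree P) (degree Q))"
  have "degree P < N" "degree Q < N" "degree (P + Q) < N"
    using degree_add_le_max[of P Q] unfolding N_def by auto
  then show ?thesis
    by (simp add: l1norm_eq sum.distrib[symmetric] sum_mono abs_triangle_ineq)
qed

lemma l1norm_smult: "l1norm (smult c P) = \<bar>c\<bar> * l1norm P"
proof -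
  have "degree (smult c P) < Suc (degree P)"
    using degree_smult_le[of c P] by simp
  then show ?thesis
    by (simp add: l1norm_eq[of _ "Suc (degree P)"] abs_mult sum_distrib_left
        del: sum.lessThan_Suc)
qed

lemma l1norm_diff: "l1norm (P - Q) \<le> l1norm P + l1norm Q"
  using l1norm_add[of P "-Q"] l1norm_smult[of "-1" Q] by simp

lemma l1norm_mult: "l1norm (P * Q) \<le> l1norm P * l1norm Q"
proof (induction P rule: pCons_induct)
  case (pCons a P)
  have "l1norm (pCons a P * Q) = l1norm (smult a Q + pCons 0 (P * Q))"
    by simp
  also have "\<dots> \<le> \<bar>a\<bar> * l1norm Q + l1norm (P * Q)"
    using l1norm_add[of "smult a Q" "pCons 0 (P * Q)"] by (simp add: l1norm_smult l1norm_pCons)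
  also have "\<dots> \<le> \<bar>a\<bar> * l1norm Q + l1norm P * l1norm Q"
    using pCons.IH by simp
  also have "\<dots> = l1norm (pCons a P) * l1norm Q"
    by (simp add: l1norm_pCons algebra_simps)
  finally show ?case .
qed simp

lemma l1norm_sum: "l1norm (\<Sum>x\<in>A. f x) \<le> (\<Sum>x\<in>A. l1norm (f x))"
proof (induction A rule: infinite_finite_induct)
  case (insert x F)
  then show ?case using l1norm_add[of "f x" "sum f F"] by simp
qed auto

lemma l1norm_prod: "l1norm (\<Prod>x\<in>A. f x) \<le> (\<Prod>x\<in>A. l1norm (f x))"
proof (induction A rule: infinite_finite_induct)
  case (insert x F)
  have "l1norm (f x * prod f F) \<le> l1norm (f x) * l1norm (prod f F)"
    by (rule l1norm_mult)
  also have "\<dots> \<le> l1norm (f x) * (\<Prod>x\<in>F. l1norm (f x))"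
    by (intro mult_left_mono insert.IH l1norm_nonneg)
  finally show ?case using insert by simp
qed simp_all

lemma l1norm_power: "l1norm (P ^ j) \<le> l1norm P ^ j"
  using l1norm_prod[of "\<lambda>_. P" "{..<j}"] by simp

definition bern_poly :: "real \<Rightarrow> real poly" where
  "bern_poly x = [:1 - x, x:]"

definition gen_poly :: "(nat \<Rightarrow> real) \<Rightarrow> nat set \<Rightarrow> real poly" where
  "gen_poly p I = (\<Prod>i\<in>I. bern_poly (p i))"

definition dpoly :: "real poly" where
  "dpoly = [:-1, 1:]"

lemma l1norm_dpoly: "l1norm dpoly = 2"
  by (simp add: dpoly_def l1norm_pCons)

lemma bern_poly_diff: "bern_poly a - bern_poly b = smult (a - b) dpoly"
  by (simp add: bern_poly_def dpoly_def)

lemma l1norm_gen_poly: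
  assumes "\<And>i. i \<in> I \<Longrightarrow> 0 \<le> p i \<and> p i \<le> 1"
  shows "l1norm (gen_poly p I) \<le> 1"
proof -
  have "l1norm (gen_poly p I) \<le> (\<Prod>i\<in>I. l1norm (bern_poly (p i)))"
    unfolding gen_poly_def by (rule l1norm_prod)
  also have "\<dots> = 1"
    using assms by (intro prod.neutral) (auto simp: bern_poly_def l1norm_pCons)
  finally show ?thesis .
qed

lemma indicator_sum_pmf_insert:
  assumes "finite A" "x \<notin> A"
  shows "indicator_sum_pmf p (insert x A) =
    bind_pmf (bernoulli_pmf (p x)) (\<lambda>y. map_pmf (\<lambda>s. of_bool y + s) (indicator_sum_pmf p A))"
proof -
  let ?P = "pair_pmf (bernoulli_pmf (p x)) (Pi_pmf A False (\<lambda>i. bernoulli_pmf (p i)))"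
  have sum_upd: "(\<Sum>i\<in>insert x A. of_bool ((f(x := y)) i)) = of_bool y + (\<Sum>i\<in>A. of_bool (f i) :: nat)"
    for f y
  proof -
    have "(\<Sum>i\<in>A. of_bool ((f(x := y)) i)) = (\<Sum>i\<in>A. of_bool (f i) :: nat)"
      using assms by (intro sum.cong) auto
    then show ?thesis using assms by (simp del: sum_of_bool_eq)
  qed
  have "indicator_sum_pmf p (insert x A) =
      map_pmf (\<lambda>(y, f). \<Sum>i\<in>insert x A. of_bool ((f(x := y)) i)) ?P"
    unfolding indicator_sum_pmf_def using assms
    by (subst Pi_pmf_insert) (simp_all only: pmf.map_comp o_def case_prod_unfold not_False_eq_True)
  also have "\<dots> = map_pmf (\<lambda>(y, f). of_bool y + (\<Sum>i\<in>A. of_bool (f i))) ?P"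
    by (simp only: sum_upd)
  also have "\<dots> = map_pmf (\<lambda>(y, s). of_bool y + s) (pair_pmf (bernoulli_pmf (p x)) (indicator_sum_pmf p A))"
    unfolding indicator_sum_pmf_def pair_map_pmf2
    by (simp add: map_pmf_comp case_prod_unfold apsnd_def map_prod_def)
  finally show ?thesis
    by (simp add: pair_pmf_def map_bind_pmf bind_map_pmf bind_return_pmf map_pmf_def bind_assoc_pmf)
qed

lemma pmf_indicator_sum_pmf:
  assumes "finite I" "\<And>i. i \<in> I \<Longrightarrow> 0 \<le> p i \<and> p i \<le> 1"
  shows "pmf (indicator_sum_pmf p I) n = coeff (gen_poly p I) n"
  using assms
proof (induction I arbitrary: n rule: finite_induct)
  case empty
  then show ?case by (simp add: indicator_sum_pmf_def gen_poly_def pmf_return)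
next
  case (insert x A)
  have px: "0 \<le> p x" "p x \<le> 1" using insert.prems by auto
  have shift0: "pmf (map_pmf Suc P) 0 = 0" and shift: "pmf (map_pmf Suc P) (Suc m) = pmf P m" for P m
    by (auto simp: pmf_map_inj' intro!: pmf_map_outside)
  have plus1: "(+) (Suc 0) = Suc" and plus0: "(+) (0::nat) = id" by auto
  have "pmf (indicator_sum_pmf p (insert x A)) n =
        p x * pmf (map_pmf Suc (indicator_sum_pmf p A)) n + (1 - p x) * pmf (indicator_sum_pmf p A) n"
    using px insert.hyps
    by (simp add: indicator_sum_pmf_insert pmf_bind plus1 plus0 pmf.map_id algebra_simps)
  also have "\<dots> = coeff (bern_poly (p x) * gen_poly p A) n"
    using insert.IH insert.prems
    by (cases n) (simp_all add: shift0 shift bern_poly_def algebra_simps)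
  also have "bern_poly (p x) * gen_poly p A = gen_poly p (insert x A)"
    using insert.hyps by (simp add: gen_poly_def)
  finally show ?case .
qed

lemma tv_dist_eq_l1norm:
  assumes "finite I" "\<And>i. i \<in> I \<Longrightarrow> 0 \<le> p i \<and> p i \<le> 1" "\<And>i. i \<in> I \<Longrightarrow> 0 \<le> q i \<and> q i \<le> 1"
  shows "tv_dist (indicator_sum_pmf p I) (indicator_sum_pmf q I) = l1norm (gen_poly p I - gen_poly q I) / 2"
proof -
  define P where "P = gen_poly p I - gen_poly q I"
  define N where "N = Suc (degree P)"
  have "(\<Sum>\<^sub>\<infinity>a. \<bar>pmf (indicator_sum_pmf p I) a - pmf (indicator_sum_pmf q I) a\<bar>)
      = (\<Sum>\<^sub>\<infinity>a. \<bar>coeff P a\<bar>)"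
    using pmf_indicator_sum_pmf[OF assms(1,2)] pmf_indicator_sum_pmf[OF assms(1,3)] by (simp add: P_def)
  also have "\<dots> = (\<Sum>\<^sub>\<infinity>a\<in>{..<N}. \<bar>coeff P a\<bar>)"
    by (intro infsum_cong_neutral) (auto simp: N_def coeff_eq_0)
  also have "\<dots> = l1norm P"
    by (simp add: l1norm_eq[of P N] N_def del: sum.lessThan_Suc)
  finally show ?thesis unfolding tv_dist_def P_def by simp
qed

lemma tv_dist_le_1:
  assumes "finite I" "\<And>i. i \<in> I \<Longrightarrow> 0 \<le> p i \<and> p i \<le> 1" "\<And>i. i \<in> I \<Longrightarrow> 0 \<le> q i \<and> q i \<le> 1"
  shows "tv_dist (indicator_sum_pmf p I) (indicator_sum_pmf q I) \<le> 1"
  using l1norm_diff[of "gen_poly p I" "gen_poly q I"] l1norm_gen_poly[of I p] l1norm_gen_poly[of I q]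
  by (simp add: tv_dist_eq_l1norm[OF assms] assms)

text \<open>The binomial polynomial \<open>((1 + X)/2)^j\<close> is the reference against which products of
  Bernoulli polynomials are compared.\<close>
definition half_poly :: "real poly" where
  "half_poly = [:1/2, 1/2:]"

lemma coeff_half_poly_power: "coeff (half_poly ^ j) i = real (j choose i) / 2 ^ j"
proof (cases "i \<le> j")
  case True
  then have "coeff (half_poly ^ j) i = real (j choose i) * (1/2) ^ i * (1/2) ^ (j - i)"
    unfolding half_poly_def using coeff_linear_poly_power[of i j "1/2::real" "1/2"] by simp
  also have "\<dots> = real (j choose i) / 2 ^ j"
    using True by (simp add: power_add[symmetric] power_divide)
  finally show ?thesis .
next
  case False
  have "degree (half_poly ^ j) \<le> j"
    unfolding half_poly_def using degree_power_le[of "[:1/2, 1/2:]::real poly" j] by simp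
  then show ?thesis using False by (simp add: coeff_eq_0)
qed

lemma l1norm_half_poly_power: "l1norm (half_poly ^ j) \<le> 1"
  using l1norm_power[of half_poly j] by (simp add: half_poly_def l1norm_pCons)

lemma variation_unimodal:
  fixes g :: "nat \<Rightarrow> real"
  assumes "m \<le> N" "g 0 = 0" "g N = 0"
    and up: "\<And>i. i < m \<Longrightarrow> g i \<le> g (Suc i)"
    and down: "\<And>i. m \<le> i \<Longrightarrow> i < N \<Longrightarrow> g (Suc i) \<le> g i"
  shows "(\<Sum>i<N. \<bar>g i - g (Suc i)\<bar>) = 2 * g m"
proof -
  have "(\<Sum>i<N. \<bar>g i - g (Suc i)\<bar>) =
      (\<Sum>i<m. \<bar>g i - g (Suc i)\<bar>) + (\<Sum>i\<in>{m..<N}. \<bar>g i - g (Suc i)\<bar>)"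
    using sum.atLeastLessThan_concat[of 0 m N "\<lambda>i. \<bar>g i - g (Suc i)\<bar>"] assms(1)
    by (simp add: atLeast0LessThan)
  also have "(\<Sum>i<m. \<bar>g i - g (Suc i)\<bar>) = (\<Sum>i<m. g (Suc i) - g i)"
    using up by (intro sum.cong) auto
  also have "\<dots> = g m" using assms(2) by (simp add: sum_lessThan_telescope)
  also have "(\<Sum>i\<in>{m..<N}. \<bar>g i - g (Suc i)\<bar>) = - (\<Sum>i\<in>{m..<N}. g (Suc i) - g i)"
    using down by (simp add: sum_negf[symmetric])
  also have "\<dots> = g m" using sum_Suc_diff'[OF assms(1), of g] assms(3) by simp
  finally show ?thesis by simp
qed

lemma coeff_dpoly_mult: "coeff (dpoly * P) i = (if i = 0 then 0 else coeff P (i - 1)) - coeff P i"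
  by (cases i) (simp_all add: dpoly_def)

lemma l1norm_dpoly_half_poly_power:
  "l1norm (dpoly * half_poly ^ j) = 2 * (real (j choose (j div 2)) / 2 ^ j)"
proof -
  define g where "g i = (if i = 0 then 0 else real (j choose (i - 1)) / 2 ^ j)" for i
  have "degree (dpoly * half_poly ^ j) \<le> 1 + j"
    using degree_mult_le[of dpoly "half_poly ^ j"]
      degree_power_le[of "[:1/2, 1/2:]::real poly" j]
    by (simp add: dpoly_def half_poly_def)
  then have "l1norm (dpoly * half_poly ^ j) = (\<Sum>i<j + 2. \<bar>coeff (dpoly * half_poly ^ j) i\<bar>)"
    by (intro l1norm_eq) simp
  also have "\<dots> = (\<Sum>i<j + 2. \<bar>g i - g (Suc i)\<bar>)"
    by (intro sum.cong refl) (simp add: coeff_dpoly_mult coeff_half_poly_power g_def)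
  also have "\<dots> = 2 * g (Suc (j div 2))"
  proof (rule variation_unimodal)
    show "g i \<le> g (Suc i)" if "i < Suc (j div 2)" for i
      using that binomial_mono[of "i - 1" i j]
      by (cases i) (auto simp: g_def divide_right_mono)
    show "g (Suc i) \<le> g i" if "Suc (j div 2) \<le> i" "i < j + 2" for i
      using that binomial_antimono[of "i - 1" i j]
      by (cases "i = j + 1") (auto simp: g_def divide_right_mono binomial_eq_0)
  qed (auto simp: g_def binomial_eq_0)
  finally show ?thesis by (simp add: g_def)
qed

lemma central_binomial_Suc: "(2 * Suc m) choose Suc m = 2 * (Suc (2 * m) choose m)"
proof -
  have "Suc m * (Suc (Suc (2 * m)) choose Suc m) = Suc (Suc (2 * m)) * (Suc (2 * m) choose m)"
    by (rule Suc_times_binomial)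
  also have "\<dots> = Suc m * (2 * (Suc (2 * m) choose m))"
    by simp
  finally have "Suc (Suc (2 * m)) choose Suc m = 2 * (Suc (2 * m) choose m)"
    by (simp only: mult_cancel1) simp
  moreover have "2 * Suc m = Suc (Suc (2 * m))" by simp
  ultimately show ?thesis by (simp only:)
qed

lemma central_binomial_sq_bound: "(real ((2 * m) choose m) / 4 ^ m)^2 \<le> 1 / (2 * real m + 1)"
proof (induction m)
  case (Suc m)
  define u where "u = real ((2 * m) choose m) / 4 ^ m"
  have "Suc (2 * m) * ((2 * m) choose m) = (Suc (2 * m) choose Suc m) * Suc m"
    by (rule Suc_times_binomial_eq)
  also have "Suc (2 * m) choose Suc m = Suc (2 * m) choose m"
    using central_binomial_odd[of "Suc (2 * m)"] by (simp del: binomial_Suc_Suc)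
  finally have "real (Suc (2 * m)) * real ((2 * m) choose m) = real (Suc (2 * m) choose m) * real (Suc m)"
    by (metis of_nat_mult)
  then have "real (Suc (2 * m) choose m) = (2 * real m + 1) * real ((2 * m) choose m) / (real m + 1)"
    by (simp add: divide_simps del: binomial_Suc_Suc) (simp add: algebra_simps)
  then have step: "real ((2 * Suc m) choose Suc m) / 4 ^ Suc m = u * ((2 * real m + 1) / (2 * real m + 2))"
    unfolding central_binomial_Suc u_def by (simp add: divide_simps del: binomial_Suc_Suc) (simp add: algebra_simps)
  have "(real ((2 * Suc m) choose Suc m) / 4 ^ Suc m)^2 = u^2 * ((2 * real m + 1) / (2 * real m + 2))^2"
    unfolding step by (rule power_mult_distrib)
  also have "\<dots> \<le> 1 / (2 * real m + 1) * ((2 * real m + 1) / (2 * real m + 2))^2"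
    using Suc.IH unfolding u_def by (intro mult_right_mono) auto
  also have "\<dots> \<le> 1 / (2 * real (Suc m) + 1)"
    by (simp add: divide_simps power2_eq_square) (simp add: algebra_simps)
  finally show ?case .
qed simp

lemma central_binomial_bound: "(real (j choose (j div 2)) / 2 ^ j)^2 \<le> 1 / (real j + 1)"
proof (cases "even j")
  case True
  then obtain m where "j = 2 * m" by blast
  then show ?thesis using central_binomial_sq_bound[of m] by (simp add: power_mult)
next
  case False
  then obtain m where j: "j = Suc (2 * m)" using oddE by fastforce
  have "real (j choose (j div 2)) / 2 ^ j = real ((2 * Suc m) choose Suc m) / 4 ^ Suc m"
    unfolding central_binomial_Suc by (simp add: j power_mult del: binomial_Suc_Suc)
  moreover have "1 / (2 * real (Suc m) + 1) \<le> 1 / (real j + 1)"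
    by (simp add: j divide_simps)
  ultimately show ?thesis
    using central_binomial_sq_bound[of "Suc m"] by simp
qed

lemma l1norm_dpoly_half_poly_power_sq: "(l1norm (dpoly * half_poly ^ j))^2 \<le> 4 / (real j + 1)"
proof -
  have "(l1norm (dpoly * half_poly ^ j))^2 = 4 * (real (j choose (j div 2)) / 2 ^ j)^2"
    unfolding l1norm_dpoly_half_poly_power power_mult_distrib by simp
  also have "\<dots> \<le> 4 * (1 / (real j + 1))"
    by (intro mult_left_mono central_binomial_bound) auto
  finally show ?thesis by simp
qed

text \<open>The second difference of the binomial polynomial has norm \<open>O(1/j)\<close>: split
  \<open>j = a + b\<close> evenly and bound each first difference by \<open>O(1/\<surd>j)\<close>.\<close>
lemma l1norm_dpoly2_half_poly_power: "l1norm (dpoly^2 * half_poly ^ j) \<le> 8 / (real j + 1)"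
proof -
  define a where "a = j div 2"
  define b where "b = j - a"
  have "dpoly^2 * half_poly ^ j = (dpoly * half_poly ^ a) * (dpoly * half_poly ^ b)"
    by (simp add: a_def b_def power_add[symmetric] power2_eq_square algebra_simps)
  then have "l1norm (dpoly^2 * half_poly ^ j) \<le> l1norm (dpoly * half_poly ^ a) * l1norm (dpoly * half_poly ^ b)"
    by (metis l1norm_mult)
  also have "\<dots> \<le> 8 / (real j + 1)"
  proof (rule power2_le_imp_le)
    have ab: "(real j + 1)^2 \<le> 4 * ((real a + 1) * (real b + 1))"
    proof (cases "even j")
      case True
      then have "real b = real a" "real j = 2 * real a" by (auto simp: a_def b_def)
      then show ?thesis by (simp add: algebra_simps power2_eq_square)
    next
      case False
      then have "real b = real a + 1" "real j = 2 * real a + 1"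
        by (auto simp: a_def b_def elim!: oddE)
      then show ?thesis by (simp add: algebra_simps power2_eq_square)
    qed
    have "(l1norm (dpoly * half_poly ^ a) * l1norm (dpoly * half_poly ^ b))^2 \<le>
        (4 / (real a + 1)) * (4 / (real b + 1))"
      unfolding power_mult_distrib by (intro mult_mono l1norm_dpoly_half_poly_power_sq) auto
    also have "\<dots> \<le> (8 / (real j + 1))^2"
      using ab by (simp add: divide_simps power2_eq_square)
    finally show "(l1norm (dpoly * half_poly ^ a) * l1norm (dpoly * half_poly ^ b))^2 \<le> (8 / (real j + 1))^2" .
  qed auto
  finally show ?thesis .
qed

lemma l1norm_dpoly2_half_poly_power_le_4: "l1norm (dpoly^2 * half_poly ^ j) \<le> 4"
proof -
  have "l1norm (dpoly^2 * half_poly ^ j) \<le> l1norm dpoly ^ 2 * l1norm (half_poly ^ j)"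
    by (rule order_trans[OF l1norm_mult mult_right_mono[OF l1norm_power l1norm_nonneg]])
  also have "\<dots> \<le> 4"
    using l1norm_half_poly_power[of j] by (simp add: l1norm_dpoly)
  finally show ?thesis .
qed

text \<open>A bound uniform in \<open>j\<close> that interpolates between the trivial bound 4 for \<open>j \<le> \<nu>/4\<close>
  and the decay \<open>O(1/j)\<close> for larger \<open>j\<close>; the exponential term is averaged out later.\<close>
lemma l1norm_dpoly2_half_poly_power_interpolate:
  assumes "nu \<ge> 0"
  shows "l1norm (dpoly^2 * half_poly ^ j) \<le> 4 * exp (nu / 4) * (1/2)^j + 32 / (nu + 4)"
proof (cases "real j \<le> nu / 4")
  case True
  have "exp (-1::real) \<le> 1/2"
    using exp_ge_add_one_self[of "1::real"] by (simp add: exp_minus field_simps)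
  then have "exp (- real j) \<le> (1/2::real)^j"
    using exp_of_nat_mult[of j "-1::real"] by (simp add: power_mono)
  moreover have "exp (- (nu / 4)) \<le> exp (- real j)" using True by simp
  ultimately have "exp (- (nu / 4)) \<le> (1/2::real)^j" by linarith
  then have "1 \<le> exp (nu / 4) * (1/2::real)^j"
    by (simp add: exp_minus field_simps)
  moreover have "0 \<le> 32 / (nu + 4)" using assms by simp
  ultimately show ?thesis
    using l1norm_dpoly2_half_poly_power_le_4[of j] by linarith
next
  case False
  have "l1norm (dpoly^2 * half_poly ^ j) \<le> 8 / (nu / 4 + 1)"
    using False assms by (intro order_trans[OF l1norm_dpoly2_half_poly_power] divide_left_mono) auto
  also have "\<dots> = 32 / (nu + 4)" by (simp add: field_simps)
  moreover have "0 \<le> 4 * exp (nu / 4) * (1/2::real)^j" by simp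
  ultimately show ?thesis by linarith
qed

text \<open>Distance of \<open>x \<in> [0,1]\<close> to the nearest endpoint; the sum of these over the factors
  measures how much a product of Bernoulli polynomials is smoothed.\<close>
definition dist01 :: "real \<Rightarrow> real" where
  "dist01 x = min x (1 - x)"

lemma dist01_bounds: "0 \<le> x \<Longrightarrow> x \<le> 1 \<Longrightarrow> 0 \<le> dist01 x \<and> dist01 x \<le> 1/2"
  unfolding dist01_def by linarith

lemma dist01_lipschitz: "dist01 y \<ge> dist01 x - \<bar>x - y\<bar>"
  unfolding dist01_def by linarith

text \<open>Choose a subset \<open>A \<subseteq> J\<close> by independent coin flips of biases \<open>r l\<close>; this is its weight.\<close>
definition subset_weight :: "(nat \<Rightarrow> real) \<Rightarrow> nat set \<Rightarrow> nat set \<Rightarrow> real" where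
  "subset_weight r J A = (\<Prod>l\<in>A. r l) * (\<Prod>l\<in>J - A. 1 - r l)"

text \<open>Generating function of \<open>card A\<close> under these weights; \<open>c = 1\<close> shows they sum to \<open>1\<close>.\<close>
lemma sum_subset_weight_power:
  assumes "finite J"
  shows "(\<Sum>A\<in>Pow J. subset_weight r J A * c ^ card A) = (\<Prod>l\<in>J. c * r l + (1 - r l))"
proof -
  have "(\<Prod>l\<in>J. c * r l + (1 - r l)) = (\<Sum>A\<in>Pow J. (\<Prod>l\<in>A. c * r l) * (\<Prod>l\<in>J - A. 1 - r l))"
    by (rule prod_add[OF assms])
  also have "\<dots> = (\<Sum>A\<in>Pow J. subset_weight r J A * c ^ card A)"
    by (intro sum.cong refl) (simp add: subset_weight_def prod.distrib)
  finally show ?thesis by simp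
qed

lemma prod_smult_half_poly:
  "finite A \<Longrightarrow> (\<Prod>l\<in>A. smult (r l) half_poly) = smult (\<Prod>l\<in>A. r l) (half_poly ^ card A)"
  by (induction A rule: finite_induct) (auto simp: mult_smult_left mult_smult_right mult.commute)

lemma l1norm_dpoly2_mixture:
  assumes J: "finite J" and r: "\<And>l. l \<in> J \<Longrightarrow> 0 \<le> r l \<and> r l \<le> 1"
    and E: "\<And>l. l \<in> J \<Longrightarrow> l1norm (E l) \<le> 1 - r l"
  shows "l1norm (dpoly^2 * (\<Prod>l\<in>J. smult (r l) half_poly + E l)) \<le>
    (\<Sum>A\<in>Pow J. subset_weight r J A * l1norm (dpoly^2 * half_poly ^ card A))"
proof -
  define T where "T A = smult (\<Prod>l\<in>A. r l) (dpoly^2 * half_poly ^ card A) * (\<Prod>l\<in>J - A. E l)" for A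
  have "(\<Prod>l\<in>J. smult (r l) half_poly + E l) =
      (\<Sum>A\<in>Pow J. (\<Prod>l\<in>A. smult (r l) half_poly) * (\<Prod>l\<in>J - A. E l))"
    by (rule prod_add[OF J])
  then have "dpoly^2 * (\<Prod>l\<in>J. smult (r l) half_poly + E l) = (\<Sum>A\<in>Pow J. T A)"
    using J by (simp add: T_def sum_distrib_left prod_smult_half_poly finite_subset
        mult_smult_right mult.assoc)
  then have "l1norm (dpoly^2 * (\<Prod>l\<in>J. smult (r l) half_poly + E l)) \<le> (\<Sum>A\<in>Pow J. l1norm (T A))"
    by (simp add: l1norm_sum)
  also have "\<dots> \<le> (\<Sum>A\<in>Pow J. subset_weight r J A * l1norm (dpoly^2 * half_poly ^ card A))"
  proof (rule sum_mono)
    fix A assume A: "A \<in> Pow J"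
    have rA: "0 \<le> (\<Prod>l\<in>A. r l)" using A r by (auto intro!: prod_nonneg)
    have "l1norm (\<Prod>l\<in>J - A. E l) \<le> (\<Prod>l\<in>J - A. l1norm (E l))"
      by (rule l1norm_prod)
    also have "\<dots> \<le> (\<Prod>l\<in>J - A. 1 - r l)"
      using E by (intro prod_mono) (auto simp: l1norm_nonneg)
    finally have "l1norm (\<Prod>l\<in>J - A. E l) \<le> (\<Prod>l\<in>J - A. 1 - r l)" .
    then have "l1norm (T A) \<le> (\<Prod>l\<in>A. r l) * l1norm (dpoly^2 * half_poly ^ card A) * (\<Prod>l\<in>J - A. 1 - r l)"
      using l1norm_mult[of "smult (\<Prod>l\<in>A. r l) (dpoly^2 * half_poly ^ card A)" "\<Prod>l\<in>J - A. E l"]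
        mult_left_mono[of _ _ "(\<Prod>l\<in>A. r l) * l1norm (dpoly^2 * half_poly ^ card A)"] rA
      by (force simp: T_def l1norm_smult l1norm_nonneg)
    then show "l1norm (T A) \<le> subset_weight r J A * l1norm (dpoly^2 * half_poly ^ card A)"
      by (simp add: subset_weight_def mult_ac)
  qed
  finally show ?thesis .
qed

text \<open>Averaging the interpolating bound over a random subset of expected size \<open>\<nu> = \<Sum> r\<^sub>l\<close>:
  the exponential term is killed by \<open>E[2^-|A|] \<le> exp(-\<nu>/2)\<close>.\<close>
lemma average_l1norm_dpoly2_half_poly_power:
  assumes J: "finite J" and r: "\<And>l. l \<in> J \<Longrightarrow> 0 \<le> r l \<and> r l \<le> 1"
  defines "nu \<equiv> \<Sum>l\<in>J. r l"
  shows "(\<Sum>A\<in>Pow J. subset_weight r J A * l1norm (dpoly^2 * half_poly ^ card A)) \<le> 48 / (nu + 4)"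
proof -
  have nu: "nu \<ge> 0" unfolding nu_def using r by (intro sum_nonneg) auto
  have w: "0 \<le> subset_weight r J A" if "A \<in> Pow J" for A
    using that r by (auto simp: subset_weight_def intro!: mult_nonneg_nonneg prod_nonneg)
  have "(\<Sum>A\<in>Pow J. subset_weight r J A * l1norm (dpoly^2 * half_poly ^ card A)) \<le>
      (\<Sum>A\<in>Pow J. subset_weight r J A * (4 * exp (nu / 4) * (1/2)^card A + 32 / (nu + 4)))"
    using w nu by (intro sum_mono mult_left_mono l1norm_dpoly2_half_poly_power_interpolate) auto
  also have "\<dots> = 4 * exp (nu / 4) * (\<Sum>A\<in>Pow J. subset_weight r J A * (1/2)^card A)
      + 32 / (nu + 4) * (\<Sum>A\<in>Pow J. subset_weight r J A * 1 ^ card A)"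
    by (simp add: sum_distrib_left sum_distrib_right sum.distrib algebra_simps sum_divide_distrib)
  also have "\<dots> = 4 * exp (nu / 4) * (\<Prod>l\<in>J. 1 - r l / 2) + 32 / (nu + 4)"
    unfolding sum_subset_weight_power[OF J] by simp
  also have "\<dots> \<le> 4 * exp (nu / 4) * exp (- nu / 2) + 32 / (nu + 4)"
  proof -
    have "(\<Prod>l\<in>J. 1 - r l / 2) \<le> (\<Prod>l\<in>J. exp (- (r l / 2)))"
    proof (rule prod_mono)
      fix l assume "l \<in> J"
      then show "0 \<le> 1 - r l / 2 \<and> 1 - r l / 2 \<le> exp (- (r l / 2))"
        using r[of l] exp_ge_add_one_self[of "- (r l / 2)"] by simp
    qed
    also have "\<dots> = exp (- nu / 2)"
      by (simp add: nu_def exp_sum[OF J, symmetric] sum_negf sum_divide_distrib)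
    finally show ?thesis by simp
  qed
  also have "\<dots> \<le> 16 / (nu + 4) + 32 / (nu + 4)"
  proof -
    have "exp (nu / 4) * exp (- nu / 2) = exp (- (nu / 4))"
      by (simp add: exp_add[symmetric])
    moreover have "nu + 4 \<le> exp (nu / 4) * 4" using exp_ge_add_one_self[of "nu / 4"] by linarith
    ultimately have "exp (nu / 4) * exp (- nu / 2) \<le> 4 / (nu + 4)"
      using nu by (simp add: exp_minus field_simps)
    then show ?thesis by simp
  qed
  finally show ?thesis by (simp add: add_divide_distrib[symmetric])
qed

text \<open>Smoothing lemma: the second difference of a product of Bernoulli polynomials has
  norm \<open>O(1/(1 + \<Sum> dist01))\<close>, since each factor contains \<open>2 dist01 x\<^sub>l\<close> copies of
  \<open>half_poly\<close>.\<close>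
lemma l1norm_dpoly2_gen_poly:
  assumes J: "finite J" and x: "\<And>l. l \<in> J \<Longrightarrow> 0 \<le> x l \<and> x l \<le> 1"
  shows "l1norm (dpoly^2 * gen_poly x J) \<le> 48 / (2 * (\<Sum>l\<in>J. dist01 (x l)) + 4)"
proof -
  define r where "r l = 2 * dist01 (x l)" for l
  have r: "0 \<le> r l \<and> r l \<le> 1" if "l \<in> J" for l
    using dist01_bounds[of "x l"] x[OF that] by (auto simp: r_def)
  have "l1norm (bern_poly (x l) - smult (r l) half_poly) \<le> 1 - r l" if "l \<in> J" for l
    using x[OF that]
    by (simp add: bern_poly_def half_poly_def r_def dist01_def l1norm_pCons)
  then have "l1norm (dpoly^2 * (\<Prod>l\<in>J. smult (r l) half_poly + (bern_poly (x l) - smult (r l) half_poly)))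
      \<le> (\<Sum>A\<in>Pow J. subset_weight r J A * l1norm (dpoly^2 * half_poly ^ card A))"
    by (intro l1norm_dpoly2_mixture J r)
  also have "\<dots> \<le> 48 / ((\<Sum>l\<in>J. r l) + 4)"
    by (rule average_l1norm_dpoly2_half_poly_power[OF J r])
  finally show ?thesis
    by (simp add: gen_poly_def r_def sum_distrib_left)
qed

lemma summation_by_parts_poly:
  fixes E :: "nat \<Rightarrow> real" and g :: "nat \<Rightarrow> real poly"
  assumes "E 0 = 0"
  shows "(\<Sum>m<Suc M. smult (E (Suc m) - E m) (g m)) =
         smult (E (Suc M)) (g M) - (\<Sum>m<M. smult (E (Suc m)) (g (Suc m) - g m))"
proof (induction M)
  case (Suc M)
  then show ?case
    by (simp add: smult_diff_right smult_diff_left algebra_simps)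
qed (simp add: assms)

text \<open>Replacing the factors \<open>a\<^sub>0, \<dots>, a\<^sub>M\<close> by \<open>b\<^sub>0, \<dots>, b\<^sub>M\<close> one at a time and summing by parts
  expresses the difference of the generating polynomials through the partial sums \<open>E\<close>
  of \<open>a - b\<close>: a boundary term and second differences of the mixed products \<open>R m\<close>.\<close>
lemma gen_poly_swap_identity:
  fixes a b :: "nat \<Rightarrow> real" and M :: nat
  defines "E \<equiv> \<lambda>m. \<Sum>t<m. a t - b t"
    and "H \<equiv> \<lambda>m. gen_poly b {..<m} * gen_poly a {Suc m..<Suc M}"
    and "R \<equiv> \<lambda>m. gen_poly b {..<m} * gen_poly a {Suc (Suc m)..<Suc M}"
  shows "gen_poly a {..<Suc M} - gen_poly b {..<Suc M} =
     smult (E (Suc M)) (dpoly * H M) - (\<Sum>m<M. smult (E (Suc m) * (b m - a (Suc m))) (dpoly^2 * R m))"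
proof -
  define N where "N = Suc M"
  define K where "K m = gen_poly b {..<m} * gen_poly a {m..<N}" for m
  have "gen_poly a {..<N} - gen_poly b {..<N} = K 0 - K N"
    by (simp add: K_def gen_poly_def atLeast0LessThan)
  also have "\<dots> = (\<Sum>m<N. K m - K (Suc m))"
    by (rule sum_lessThan_telescope'[symmetric])
  also have "\<dots> = (\<Sum>m<N. smult (E (Suc m) - E m) (dpoly * H m))"
  proof (intro sum.cong refl)
    fix m assume m: "m \<in> {..<N}"
    have "K m = gen_poly b {..<m} * (bern_poly (a m) * gen_poly a {Suc m..<N})"
      using m by (simp add: K_def gen_poly_def prod.atLeast_Suc_lessThan)
    moreover have "K (Suc m) = gen_poly b {..<m} * (bern_poly (b m) * gen_poly a {Suc m..<N})"
      by (simp add: K_def gen_poly_def mult_ac)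
    ultimately have "K m - K (Suc m) =
        gen_poly b {..<m} * ((bern_poly (a m) - bern_poly (b m)) * gen_poly a {Suc m..<N})"
      by (simp add: algebra_simps)
    then show "K m - K (Suc m) = smult (E (Suc m) - E m) (dpoly * H m)"
      by (simp add: bern_poly_diff H_def N_def E_def mult_ac)
  qed
  also have "\<dots> = smult (E (Suc M)) (dpoly * H M) -
      (\<Sum>m<M. smult (E (Suc m)) (dpoly * H (Suc m) - dpoly * H m))"
    unfolding N_def by (rule summation_by_parts_poly) (simp add: E_def)
  also have "(\<Sum>m<M. smult (E (Suc m)) (dpoly * H (Suc m) - dpoly * H m)) =
      (\<Sum>m<M. smult (E (Suc m) * (b m - a (Suc m))) (dpoly^2 * R m))"
  proof (intro sum.cong refl)
    fix m assume m: "m \<in> {..<M}"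
    have "H (Suc m) = gen_poly b {..<m} * bern_poly (b m) * gen_poly a {Suc (Suc m)..<Suc M}"
      by (simp add: H_def gen_poly_def)
    moreover have "gen_poly a {Suc m..<Suc M} = bern_poly (a (Suc m)) * gen_poly a {Suc (Suc m)..<Suc M}"
      unfolding gen_poly_def using m by (subst prod.atLeast_Suc_lessThan) auto
    then have "H m = gen_poly b {..<m} * bern_poly (a (Suc m)) * gen_poly a {Suc (Suc m)..<Suc M}"
      by (simp add: H_def mult_ac)
    ultimately have "dpoly * H (Suc m) - dpoly * H m =
        dpoly * (gen_poly b {..<m} * (bern_poly (b m) - bern_poly (a (Suc m))) * gen_poly a {Suc (Suc m)..<Suc M})"
      by (simp add: algebra_simps)
    then show "smult (E (Suc m)) (dpoly * H (Suc m) - dpoly * H m) =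
        smult (E (Suc m) * (b m - a (Suc m))) (dpoly^2 * R m)"
      by (simp add: bern_poly_diff R_def mult_ac power2_eq_square)
  qed
  finally show ?thesis unfolding N_def .
qed

lemma l1norm_gen_poly_swap:
  fixes a b :: "nat \<Rightarrow> real" and M :: nat
  assumes "\<And>t. 0 \<le> a t \<and> a t \<le> 1" "\<And>t. 0 \<le> b t \<and> b t \<le> 1"
  defines "E \<equiv> \<lambda>m. \<Sum>t<m. a t - b t"
    and "R \<equiv> \<lambda>m. gen_poly b {..<m} * gen_poly a {Suc (Suc m)..<Suc M}"
  shows "l1norm (gen_poly a {..<Suc M} - gen_poly b {..<Suc M}) \<le>
     2 * \<bar>E (Suc M)\<bar> + (\<Sum>m<M. \<bar>E (Suc m)\<bar> * \<bar>b m - a (Suc m)\<bar> * l1norm (dpoly^2 * R m))"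
proof -
  define H where "H = gen_poly b {..<M} * gen_poly a {Suc M..<Suc M}"
  have "l1norm H \<le> 1 * 1"
    unfolding H_def using assms(1,2)
    by (intro order_trans[OF l1norm_mult] mult_mono l1norm_gen_poly l1norm_nonneg) auto
  then have "l1norm (dpoly * H) \<le> 2"
    using l1norm_mult[of dpoly H] by (simp add: l1norm_dpoly)
  then have "l1norm (smult (E (Suc M)) (dpoly * H)) \<le> 2 * \<bar>E (Suc M)\<bar>"
    using mult_left_mono[of _ 2 "\<bar>E (Suc M)\<bar>"] by (simp add: l1norm_smult mult.commute[of _ 2])
  moreover have "l1norm (\<Sum>m<M. smult (E (Suc m) * (b m - a (Suc m))) (dpoly^2 * R m)) \<le>
     (\<Sum>m<M. \<bar>E (Suc m)\<bar> * \<bar>b m - a (Suc m)\<bar> * l1norm (dpoly^2 * R m))"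
    by (rule order_trans[OF l1norm_sum]) (simp add: l1norm_smult abs_mult)
  ultimately show ?thesis
    unfolding gen_poly_swap_identity[of a M b] E_def R_def H_def
    by (intro order_trans[OF l1norm_diff] add_mono)
qed

lemma downclosed_initial_segment:
  fixes S :: "nat set"
  assumes "t0 \<notin> S" and "\<And>s t. s \<le> t \<Longrightarrow> t \<in> S \<Longrightarrow> s \<in> S"
  shows "\<exists>c. S = {..<c}"
proof
  define c where "c = (LEAST t. t \<notin> S)"
  have "c \<notin> S" unfolding c_def using assms(1) by (rule LeastI)
  then have "t < c" if "t \<in> S" for t
    using assms(2)[of c t] that by (meson not_le)
  moreover have "t \<in> S" if "t < c" for t
    using not_less_Least[of t "\<lambda>t. t \<notin> S"] that unfolding c_def by blast
  ultimately show "S = {..<c}" by auto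
qed

lemma upclosed_final_segment:
  fixes S :: "nat set"
  assumes "S \<subseteq> {..<N}" and "\<And>s t. s \<le> t \<Longrightarrow> t < N \<Longrightarrow> s \<in> S \<Longrightarrow> t \<in> S"
  shows "\<exists>c. S = {c..<N}"
proof -
  have "\<exists>c. {..<N} - S = {..<c}"
    by (rule downclosed_initial_segment[of N]) (use assms(2) in auto)
  then obtain c where c: "{..<N} - S = {..<c}" ..
  have "t \<in> S \<longleftrightarrow> t \<in> {c..<N}" for t
    using assms(1) c[unfolded set_eq_iff, rule_format, of t] by auto
  then have "S = {c..<N}" by blast
  then show ?thesis ..
qed

context
  fixes a b :: "nat \<Rightarrow> real" and M :: nat and k dl :: real
  assumes unit: "\<And>t. 0 \<le> a t \<and> a t \<le> 1" "\<And>t. 0 \<le> b t \<and> b t \<le> 1"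
    and k16: "k \<ge> 16"
    and close: "\<And>t. t < Suc M \<Longrightarrow> \<bar>a t - b t\<bar> \<le> 1/k"
    and partial: "\<And>u v. v \<le> Suc M \<Longrightarrow> \<bar>\<Sum>t\<in>{u..<v}. a t - b t\<bar> \<le> dl"
    and dl: "0 \<le> dl" "dl \<le> 1/2"
    and sorted: "\<And>s t. s \<le> t \<Longrightarrow> t < Suc M \<Longrightarrow> a s \<le> a t"
begin

text \<open>Indices where \<open>a\<^sub>t\<close> is within \<open>2/k\<close> of 0 or of 1.  Away from them \<open>b\<^sub>t\<close> is comparable
  to \<open>a\<^sub>t\<close>; near them the discrepancy is paid for by the partial-sum bound, since by
  monotonicity they form an initial resp. final segment.\<close>
definition near0 :: "nat set" where
  "near0 = {t. t < Suc M \<and> a t < 2/k}"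

definition near1 :: "nat set" where
  "near1 = {t. t < Suc M \<and> a t > 1 - 2/k}"

definition correction :: "nat \<Rightarrow> real" where
  "correction t = (if t \<in> near0 then b t - a t else 0) + (if t \<in> near1 then a t - b t else 0)"

lemma near0_initial: "\<exists>c. near0 = {..<c}"
proof (rule downclosed_initial_segment[of "Suc M"])
  show "s \<in> near0" if "s \<le> t" "t \<in> near0" for s t
    using that sorted[of s t] by (auto simp: near0_def)
qed (simp add: near0_def)

lemma near1_final: "\<exists>c. near1 = {c..<Suc M}"
proof (rule upclosed_final_segment)
  show "t \<in> near1" if "s \<le> t" "t < Suc M" "s \<in> near1" for s t
    using that sorted[of s t] by (auto simp: near1_def)
qed (auto simp: near1_def)

lemma correction_sum:
  assumes "m \<le> Suc M"
  shows "\<bar>\<Sum>t<m. correction t\<bar> \<le> 2 * dl"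
proof -
  obtain c0 where c0: "near0 = {..<c0}" using near0_initial ..
  obtain c1 where c1: "near1 = {c1..<Suc M}" using near1_final ..
  have "(\<Sum>t<m. if t \<in> near0 then b t - a t else 0) = (\<Sum>t\<in>{..<m} \<inter> near0. b t - a t)"
    by (simp add: sum.inter_restrict)
  also have "{..<m} \<inter> near0 = {0..<min m c0}" unfolding c0 by auto
  also have "(\<Sum>t\<in>{0..<min m c0}. b t - a t) = - (\<Sum>t\<in>{0..<min m c0}. a t - b t)"
    by (simp add: sum_negf[symmetric])
  finally have s0: "\<bar>\<Sum>t<m. if t \<in> near0 then b t - a t else 0\<bar> \<le> dl"
    using partial[of "min m c0" 0] assms by simp
  have "(\<Sum>t<m. if t \<in> near1 then a t - b t else 0) = (\<Sum>t\<in>{..<m} \<inter> near1. a t - b t)"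
    by (simp add: sum.inter_restrict)
  also have "{..<m} \<inter> near1 = {c1..<m}" unfolding c1 using assms by auto
  finally have s1: "\<bar>\<Sum>t<m. if t \<in> near1 then a t - b t else 0\<bar> \<le> dl"
    using partial[OF assms, of c1] by simp
  show ?thesis
    using s0 s1 by (simp add: correction_def sum.distrib)
qed

lemma per_index_bounds:
  assumes t: "t < Suc M"
  shows "dist01 (b t) \<ge> dist01 (a t) / 2 + correction t"
    and "\<bar>a t - b t\<bar> \<le> 2 * dist01 (a t) + correction t"
proof -
  have c: "\<bar>a t - b t\<bar> \<le> 1/k" using close[OF t] .
  have k: "1/k \<le> 1/16" using k16 by (intro divide_left_mono) auto
  have a: "0 \<le> a t" "a t \<le> 1" and b: "0 \<le> b t" "b t \<le> 1" using unit by auto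
  consider (zero) "t \<in> near0" | (one) "t \<in> near1" | (middle) "t \<notin> near0" "t \<notin> near1" by blast
  then have "dist01 (b t) \<ge> dist01 (a t) / 2 + correction t \<and>
      \<bar>a t - b t\<bar> \<le> 2 * dist01 (a t) + correction t"
  proof cases
    case zero
    then have "a t < 2/k" "t \<notin> near1" using k by (auto simp: near0_def near1_def)
    then have "dist01 (a t) = a t" "dist01 (b t) = b t" "correction t = b t - a t"
      using c k zero by (auto simp: dist01_def correction_def abs_le_iff)
    then show ?thesis using a b by (simp add: abs_le_iff)
  next
    case one
    then have "a t > 1 - 2/k" "t \<notin> near0" using k by (auto simp: near0_def near1_def)
    then have "dist01 (a t) = 1 - a t" "dist01 (b t) = 1 - b t" "correction t = a t - b t"
      using c k one by (auto simp: dist01_def correction_def abs_le_iff)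
    then show ?thesis using a b by (simp add: abs_le_iff field_simps)
  next
    case middle
    then have "dist01 (a t) \<ge> 2/k" "correction t = 0"
      using t by (auto simp: near0_def near1_def dist01_def correction_def)
    then show ?thesis
      using c dist01_lipschitz[of "a t" "b t"] dist01_bounds[of "a t"] a by auto
  qed
  then show "dist01 (b t) \<ge> dist01 (a t) / 2 + correction t"
    and "\<bar>a t - b t\<bar> \<le> 2 * dist01 (a t) + correction t" by auto
qed

lemma dist01_sum_lower:
  assumes "m \<le> Suc M"
  shows "(\<Sum>t<m. dist01 (b t)) \<ge> (\<Sum>t<m. dist01 (a t)) / 2 - 2 * dl"
proof -
  have "(\<Sum>t<m. dist01 (a t) / 2 + correction t) \<le> (\<Sum>t<m. dist01 (b t))"
    using assms by (intro sum_mono per_index_bounds(1)) auto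
  then show ?thesis
    using correction_sum[OF assms] by (simp add: sum.distrib sum_divide_distrib)
qed

lemma abs_diff_sum_upper:
  "(\<Sum>t<Suc M. \<bar>a t - b t\<bar>) \<le> 2 * (\<Sum>t<Suc M. dist01 (a t)) + 2 * dl"
proof -
  have "(\<Sum>t<Suc M. \<bar>a t - b t\<bar>) \<le> (\<Sum>t<Suc M. 2 * dist01 (a t) + correction t)"
    by (intro sum_mono per_index_bounds(2)) auto
  then show ?thesis
    using correction_sum[of "Suc M"] by (simp add: sum.distrib sum_distrib_left)
qed

text \<open>The mixed products in the swap identity are still smooth: they retain at least half
  of the total distance \<open>\<Sum> dist01 (a\<^sub>t)\<close> from the endpoints.\<close>
lemma l1norm_dpoly2_mixed_product:
  assumes m: "m < M"
  shows "l1norm (dpoly^2 * (gen_poly b {..<m} * gen_poly a {Suc (Suc m)..<Suc M}))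
    \<le> 96 / ((\<Sum>t<Suc M. dist01 (a t)) + 4)"
proof -
  define x where "x t = (if t < m then b t else a t)" for t
  define J where "J = {..<m} \<union> {Suc (Suc m)..<Suc M}"
  define SA where "SA = (\<Sum>t<m. dist01 (a t))"
  define SB where "SB = (\<Sum>t<m. dist01 (b t))"
  define TL where "TL = (\<Sum>t\<in>{Suc (Suc m)..<Suc M}. dist01 (a t))"
  define Mt where "Mt = (\<Sum>t<Suc M. dist01 (a t))"
  have d: "0 \<le> dist01 (a t)" "dist01 (a t) \<le> 1/2" for t using dist01_bounds unit by blast+
  have "gen_poly x J = gen_poly x {..<m} * gen_poly x {Suc (Suc m)..<Suc M}"
    unfolding gen_poly_def J_def by (rule prod.union_disjoint) auto
  also have "\<dots> = gen_poly b {..<m} * gen_poly a {Suc (Suc m)..<Suc M}"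
    unfolding gen_poly_def x_def by (intro arg_cong2[where f = "(*)"] prod.cong) auto
  finally have RG: "gen_poly b {..<m} * gen_poly a {Suc (Suc m)..<Suc M} = gen_poly x J" ..
  have "(\<Sum>l\<in>J. dist01 (x l)) = (\<Sum>t<m. dist01 (x t)) + (\<Sum>t\<in>{Suc (Suc m)..<Suc M}. dist01 (x t))"
    unfolding J_def by (rule sum.union_disjoint) auto
  also have "\<dots> = SB + TL"
    unfolding SB_def TL_def x_def by (intro arg_cong2[where f = "(+)"] sum.cong) auto
  finally have SJ: "(\<Sum>l\<in>J. dist01 (x l)) = SB + TL" .
  have "Mt = SA + (\<Sum>t\<in>{m..<Suc M}. dist01 (a t))"
    using sum.atLeastLessThan_concat[of 0 m "Suc M" "\<lambda>t. dist01 (a t)"] m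
    by (simp add: Mt_def SA_def atLeast0LessThan)
  also have "(\<Sum>t\<in>{m..<Suc M}. dist01 (a t)) = dist01 (a m) + (dist01 (a (Suc m)) + TL)"
    using m by (simp add: TL_def sum.atLeast_Suc_lessThan del: sum.op_ivl_Suc)
  finally have "Mt \<le> SA + 1 + TL" using d[of m] d[of "Suc m"] by linarith
  moreover have "SB \<ge> SA / 2 - 1"
    using dist01_sum_lower[of m] m dl unfolding SA_def SB_def by linarith
  moreover have "SB \<ge> 0" unfolding SB_def using dist01_bounds unit by (intro sum_nonneg) blast
  moreover have "TL \<ge> 0" unfolding TL_def using d by (intro sum_nonneg) auto
  moreover have "Mt \<ge> 0" unfolding Mt_def using d by (intro sum_nonneg) auto
  ultimately have lb: "2 * (\<Sum>l\<in>J. dist01 (x l)) + 4 \<ge> (Mt + 4) / 2"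
    unfolding SJ by (simp add: field_simps)
  have "l1norm (dpoly^2 * gen_poly x J) \<le> 48 / (2 * (\<Sum>l\<in>J. dist01 (x l)) + 4)"
    using unit by (intro l1norm_dpoly2_gen_poly) (auto simp: J_def x_def)
  also have "\<dots> \<le> 48 / ((Mt + 4) / 2)"
    using lb \<open>Mt \<ge> 0\<close> by (intro divide_left_mono) auto
  finally show ?thesis unfolding RG Mt_def by simp
qed

text \<open>The coefficients \<open>b\<^sub>m - a\<^sub>m\<^sub>+\<^sub>1\<close> of the second-difference terms have total size
  \<open>O(1 + \<Sum> dist01 (a\<^sub>t))\<close>, because \<open>a\<close> is monotone.\<close>
lemma shifted_diff_sum:
  "(\<Sum>m<M. \<bar>b m - a (Suc m)\<bar>) \<le> 2 * (\<Sum>t<Suc M. dist01 (a t)) + 2"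
proof -
  have "(\<Sum>m<M. \<bar>b m - a (Suc m)\<bar>) \<le> (\<Sum>m<M. \<bar>a m - b m\<bar> + (a (Suc m) - a m))"
  proof (rule sum_mono)
    fix m assume "m \<in> {..<M}"
    then have "a m \<le> a (Suc m)" by (intro sorted) auto
    then show "\<bar>b m - a (Suc m)\<bar> \<le> \<bar>a m - b m\<bar> + (a (Suc m) - a m)" by linarith
  qed
  also have "\<dots> = (\<Sum>m<M. \<bar>a m - b m\<bar>) + (a M - a 0)"
    by (simp add: sum.distrib sum_lessThan_telescope)
  also have "(\<Sum>m<M. \<bar>a m - b m\<bar>) \<le> (\<Sum>m<Suc M. \<bar>a m - b m\<bar>)" by simp
  finally show ?thesis
    using abs_diff_sum_upper unit[of M] unit[of 0] dl by linarith
qed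

theorem l1norm_gen_poly_sorted_rounding:
  "l1norm (gen_poly a {..<Suc M} - gen_poly b {..<Suc M}) \<le> 194 * dl"
proof -
  define E where "E m = (\<Sum>t<m. a t - b t)" for m
  define Mt where "Mt = (\<Sum>t<Suc M. dist01 (a t))"
  define Q where "Q = dl * (96 / (Mt + 4))"
  have Mt: "Mt \<ge> 0" unfolding Mt_def using dist01_bounds unit by (intro sum_nonneg) blast
  have E: "\<bar>E m\<bar> \<le> dl" if "m \<le> Suc M" for m
    using partial[OF that, of 0] by (simp add: E_def atLeast0LessThan)
  have "l1norm (gen_poly a {..<Suc M} - gen_poly b {..<Suc M}) \<le> 2 * \<bar>E (Suc M)\<bar> +
      (\<Sum>m<M. \<bar>E (Suc m)\<bar> * \<bar>b m - a (Suc m)\<bar> *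
         l1norm (dpoly^2 * (gen_poly b {..<m} * gen_poly a {Suc (Suc m)..<Suc M})))"
    unfolding E_def using unit by (intro l1norm_gen_poly_swap) auto
  also have "\<dots> \<le> 2 * dl + (\<Sum>m<M. Q * \<bar>b m - a (Suc m)\<bar>)"
  proof (intro add_mono sum_mono)
    fix m assume "m \<in> {..<M}"
    show "\<bar>E (Suc m)\<bar> * \<bar>b m - a (Suc m)\<bar> *
        l1norm (dpoly^2 * (gen_poly b {..<m} * gen_poly a {Suc (Suc m)..<Suc M})) \<le> Q * \<bar>b m - a (Suc m)\<bar>"
    proof -
      let ?L = "l1norm (dpoly^2 * (gen_poly b {..<m} * gen_poly a {Suc (Suc m)..<Suc M}))"
      have L: "\<bar>E (Suc m)\<bar> * ?L \<le> Q"
        unfolding Q_def Mt_def using \<open>m \<in> {..<M}\<close> E[of "Suc m"]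
        by (intro mult_mono l1norm_dpoly2_mixed_product) (auto simp: l1norm_nonneg)
      have "\<bar>E (Suc m)\<bar> * \<bar>b m - a (Suc m)\<bar> * ?L = \<bar>b m - a (Suc m)\<bar> * (\<bar>E (Suc m)\<bar> * ?L)"
        by (simp only: mult_ac)
      also have "\<dots> \<le> \<bar>b m - a (Suc m)\<bar> * Q"
        using L by (rule mult_left_mono) simp
      finally show ?thesis by (simp only: mult_ac)
    qed
  qed (use E[of "Suc M"] in simp)
  also have "(\<Sum>m<M. Q * \<bar>b m - a (Suc m)\<bar>) \<le> Q * (2 * Mt + 2)"
    unfolding sum_distrib_left[symmetric] Mt_def
    using shifted_diff_sum dl Mt by (intro mult_left_mono) (auto simp: Q_def Mt_def)
  also have "Q * (2 * Mt + 2) \<le> 192 * dl"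
  proof -
    have "96 / (Mt + 4) * (2 * Mt + 2) \<le> 192" using Mt by (simp add: field_simps)
    then have "dl * (96 / (Mt + 4) * (2 * Mt + 2)) \<le> dl * 192"
      using dl(1) by (rule mult_left_mono)
    then show ?thesis unfolding Q_def by (simp only: mult_ac)
  qed
  finally show ?thesis by simp
qed

end

text \<open>Rounding along a fixed order: \<open>round_seq k A t\<close> is the increment of
  \<open>\<lfloor>k \<cdot> (A\<^sub>0 + \<dots> + A\<^sub>t\<^sub>-\<^sub>1)\<rfloor> / k\<close>, so every partial sum of \<open>A - round_seq k A\<close> is a
  difference of two fractional parts divided by \<open>k\<close>.\<close>
definition round_seq :: "nat \<Rightarrow> (nat \<Rightarrow> real) \<Rightarrow> nat \<Rightarrow> real" where
  "round_seq k A t =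
     (of_int \<lfloor>real k * (\<Sum>s<Suc t. A s)\<rfloor> - of_int \<lfloor>real k * (\<Sum>s<t. A s)\<rfloor>) / real k"

lemma round_seq_on_grid: "\<exists>m::int. round_seq k A t = real_of_int m / real k"
  unfolding round_seq_def by (intro exI[of _ "\<lfloor>real k * (\<Sum>s<Suc t. A s)\<rfloor> - \<lfloor>real k * (\<Sum>s<t. A s)\<rfloor>"]) simp

lemma round_seq_interval_sum:
  assumes "k > 0"
  shows "\<bar>\<Sum>t\<in>{u..<v}. A t - round_seq k A t\<bar> \<le> 1 / real k"
proof (cases "u \<le> v")
  case True
  define F where "F m = frac (real k * (\<Sum>s<m. A s))" for m
  have "A t - round_seq k A t = (F (Suc t) - F t) / real k" for t
    using assms by (simp add: round_seq_def F_def frac_def field_simps)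
  then have "(\<Sum>t\<in>{u..<v}. A t - round_seq k A t) = (F v - F u) / real k"
    using sum_Suc_diff'[OF True, of F] by (simp add: sum_divide_distrib[symmetric])
  moreover have "0 \<le> F m \<and> F m < 1" for m
    by (simp add: F_def frac_lt_1)
  then have "\<bar>F v - F u\<bar> \<le> 1"
    by (smt (verit))
  ultimately show ?thesis
    using assms by (simp add: abs_divide divide_right_mono)
qed simp

lemma round_seq_unit:
  assumes "k > 0" "0 \<le> A t" "A t \<le> 1"
  shows "0 \<le> round_seq k A t \<and> round_seq k A t \<le> 1"
proof -
  define x where "x = real k * (\<Sum>s<t. A s)"
  define y where "y = real k * A t"
  have y: "0 \<le> y" "y \<le> real k" using assms by (simp_all add: y_def mult_left_le)
  have "\<lfloor>x\<rfloor> \<le> \<lfloor>x + y\<rfloor>" using y by (intro floor_mono) simp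
  moreover have "\<lfloor>x + y\<rfloor> \<le> \<lfloor>x\<rfloor> + int k"
    using y floor_mono[of "x + y" "x + real k"] by simp
  ultimately have "0 \<le> \<lfloor>x + y\<rfloor> - \<lfloor>x\<rfloor>" "real_of_int (\<lfloor>x + y\<rfloor> - \<lfloor>x\<rfloor>) \<le> real k"
    by linarith+
  moreover have "round_seq k A t = real_of_int (\<lfloor>x + y\<rfloor> - \<lfloor>x\<rfloor>) / real k"
    by (simp add: round_seq_def x_def y_def algebra_simps)
  ultimately show ?thesis using assms by simp
qed

lemma tv_dist_sorted_enumeration:
  fixes e :: "nat \<Rightarrow> nat" and p q :: "nat \<Rightarrow> real" and k dl :: real
  assumes e: "bij_betw e {..<N} I"
    and p: "\<And>i. i \<in> I \<Longrightarrow> 0 \<le> p i \<and> p i \<le> 1" and q: "\<And>i. i \<in> I \<Longrightarrow> 0 \<le> q i \<and> q i \<le> 1"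
    and k16: "k \<ge> 16"
    and close: "\<And>t. t < N \<Longrightarrow> \<bar>p (e t) - q (e t)\<bar> \<le> 1/k"
    and partial: "\<And>u v. v \<le> N \<Longrightarrow> \<bar>\<Sum>t\<in>{u..<v}. p (e t) - q (e t)\<bar> \<le> dl"
    and dl: "0 \<le> dl" "dl \<le> 1/2"
    and sorted: "\<And>s t. s \<le> t \<Longrightarrow> t < N \<Longrightarrow> p (e s) \<le> p (e t)"
  shows "tv_dist (indicator_sum_pmf p I) (indicator_sum_pmf q I) \<le> 97 * dl"
proof (cases N)
  case 0
  then have "I = {}" using e by (simp add: bij_betw_def)
  then show ?thesis using dl by (subst tv_dist_eq_l1norm) (simp_all add: gen_poly_def)
next
  case (Suc M)
  define a where "a = (\<lambda>t. if t < N then p (e t) else 0)"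
  define b where "b = (\<lambda>t. if t < N then q (e t) else 0)"
  have eI: "e t \<in> I" if "t < N" for t using e that by (auto simp: bij_betw_def)
  have reindex: "gen_poly f I = gen_poly (\<lambda>t. if t < N then f (e t) else 0) {..<N}" for f
  proof -
    have "(\<Prod>t<N. bern_poly (if t < N then f (e t) else 0)) = (\<Prod>t<N. bern_poly (f (e t)))"
      by (rule prod.cong) auto
    then show ?thesis
      unfolding gen_poly_def using prod.reindex_bij_betw[OF e, of "\<lambda>i. bern_poly (f i)"] by simp
  qed
  have "l1norm (gen_poly a {..<Suc M} - gen_poly b {..<Suc M}) \<le> 194 * dl"
  proof (rule l1norm_gen_poly_sorted_rounding)
    show "0 \<le> a t \<and> a t \<le> 1" "0 \<le> b t \<and> b t \<le> 1" for t
      using p[OF eI] q[OF eI] by (auto simp: a_def b_def)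
    show "\<bar>\<Sum>t\<in>{u..<v}. a t - b t\<bar> \<le> dl" if "v \<le> Suc M" for u v
    proof -
      have "(\<Sum>t\<in>{u..<v}. a t - b t) = (\<Sum>t\<in>{u..<v}. p (e t) - q (e t))"
        using that Suc by (intro sum.cong) (auto simp: a_def b_def)
      then show ?thesis using partial[of v u] that Suc by simp
    qed
  qed (use k16 close dl sorted Suc in \<open>auto simp: a_def b_def\<close>)
  moreover have "finite I" using e bij_betw_finite by blast
  ultimately show ?thesis
    using Suc by (simp add: tv_dist_eq_l1norm p q reindex a_def b_def)
qed

definition skip :: "nat \<Rightarrow> nat \<Rightarrow> nat" where
  "skip j s = (if s < j then s else Suc s)"

lemma skip_mono: "s \<le> t \<Longrightarrow> skip j s \<le> skip j t"
  by (simp add: skip_def)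

lemma skip_bij:
  assumes "j < N"
  shows "bij_betw (skip j) {..<N - 1} ({..<N} - {j})"
proof (rule bij_betw_imageI)
  show "inj_on (skip j) {..<N - 1}" by (auto simp: inj_on_def skip_def split: if_splits)
  have "t \<in> skip j ` {..<N - 1}" if "t < N" "t \<noteq> j" for t
  proof (cases "t < j")
    case True
    then show ?thesis using that assms by (intro image_eqI[of _ _ t]) (auto simp: skip_def)
  next
    case False
    then show ?thesis using that assms by (intro image_eqI[of _ _ "t - 1"]) (auto simp: skip_def)
  qed
  then show "skip j ` {..<N - 1} = {..<N} - {j}"
    using assms by (auto simp: skip_def)
qed

lemma sum_skip:
  fixes g :: "nat \<Rightarrow> real"
  shows "(\<Sum>s\<in>{u..<v}. g (skip j s)) = (\<Sum>t\<in>{u..<min v j}. g t) + (\<Sum>t\<in>{Suc (max u j)..<Suc v}. g t)"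
proof -
  have "(\<Sum>s\<in>{u..<v}. g (skip j s)) =
      (\<Sum>s\<in>{u..<min v j}. g (skip j s)) + (\<Sum>s\<in>{max u j..<v}. g (skip j s))"
    by (subst sum.union_disjoint[symmetric]) (auto intro: sum.cong)
  also have "(\<Sum>s\<in>{u..<min v j}. g (skip j s)) = (\<Sum>t\<in>{u..<min v j}. g t)"
    by (intro sum.cong) (auto simp: skip_def)
  also have "(\<Sum>s\<in>{max u j..<v}. g (skip j s)) = (\<Sum>s\<in>{max u j..<v}. g (Suc s))"
    by (intro sum.cong) (auto simp: skip_def)
  also have "\<dots> = (\<Sum>t\<in>{Suc (max u j)..<Suc v}. g t)"
    by (rule sum.shift_bounds_Suc_ivl[symmetric])
  finally show ?thesis .
qed

text \<open>Deleting one index at most doubles the partial-sum bound, so the estimate survives.\<close>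
lemma tv_dist_sorted_enumeration_delete:
  fixes e :: "nat \<Rightarrow> nat" and p q :: "nat \<Rightarrow> real" and k dl :: real
  assumes e: "bij_betw e {..<N} I" and j: "j \<in> I"
    and p: "\<And>i. i \<in> I \<Longrightarrow> 0 \<le> p i \<and> p i \<le> 1" and q: "\<And>i. i \<in> I \<Longrightarrow> 0 \<le> q i \<and> q i \<le> 1"
    and k16: "k \<ge> 16"
    and close: "\<And>t. t < N \<Longrightarrow> \<bar>p (e t) - q (e t)\<bar> \<le> 1/k"
    and partial: "\<And>u v. v \<le> N \<Longrightarrow> \<bar>\<Sum>t\<in>{u..<v}. p (e t) - q (e t)\<bar> \<le> dl"
    and dl: "0 \<le> dl" "dl \<le> 1/4"
    and sorted: "\<And>s t. s \<le> t \<Longrightarrow> t < N \<Longrightarrow> p (e s) \<le> p (e t)"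
  shows "tv_dist (indicator_sum_pmf p (I - {j})) (indicator_sum_pmf q (I - {j})) \<le> 194 * dl"
proof -
  define tj where "tj = inv_into {..<N} e j"
  have tj: "tj < N" "e tj = j"
    using bij_betw_inv_into_right[OF e j] bij_betw_apply[OF bij_betw_inv_into[OF e] j]
    by (auto simp: tj_def)
  have skip_lt: "skip tj s < N" if "s < N - 1" for s using that tj by (auto simp: skip_def)
  have "bij_betw e ({..<N} - {tj}) (I - {j})"
    using bij_betw_subset[OF e, of "{..<N} - {tj}"] e tj
    by (auto simp: bij_betw_def dest: inj_onD)
  then have e': "bij_betw (e \<circ> skip tj) {..<N - 1} (I - {j})"
    by (rule bij_betw_trans[OF skip_bij[OF tj(1)]])
  have "tv_dist (indicator_sum_pmf p (I - {j})) (indicator_sum_pmf q (I - {j})) \<le> 97 * (2 * dl)"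
  proof (rule tv_dist_sorted_enumeration[OF e'])
    show "\<bar>\<Sum>t\<in>{u..<v}. p ((e \<circ> skip tj) t) - q ((e \<circ> skip tj) t)\<bar> \<le> 2 * dl"
      if "v \<le> N - 1" for u v
    proof -
      let ?g = "\<lambda>t. p (e t) - q (e t)"
      have "\<bar>(\<Sum>t\<in>{u..<min v tj}. ?g t) + (\<Sum>t\<in>{Suc (max u tj)..<Suc v}. ?g t)\<bar> \<le> dl + dl"
        using that tj(1) by (intro order_trans[OF abs_triangle_ineq] add_mono partial) auto
      then show ?thesis
        using sum_skip[where g = ?g and u = u and v = v and j = tj] by simp
    qed
  qed (use p q k16 close dl sorted skip_lt skip_mono in auto)
  then show ?thesis by simp
qed

lemma sorted_enumeration:
  fixes p :: "nat \<Rightarrow> real"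
  assumes "finite I"
  shows "\<exists>e. bij_betw e {..<card I} I \<and> (\<forall>s t. s \<le> t \<longrightarrow> t < card I \<longrightarrow> p (e s) \<le> p (e t))"
proof -
  define L where "L = sort_key p (sorted_list_of_set I)"
  have L: "distinct L" "set L = I" "length L = card I" "sorted (map p L)"
    using assms by (simp_all add: L_def distinct_card[symmetric])
  have "bij_betw ((!) L) {..<card I} I"
    using L by (intro bij_betw_nth) auto
  moreover have "p (L ! s) \<le> p (L ! t)" if "s \<le> t" "t < card I" for s t
    using sorted_nth_mono[OF L(4) that(1)] that L(3) by simp
  ultimately show ?thesis by blast
qed

lemma sorted_rounding:
  fixes p :: "nat \<Rightarrow> real" and e :: "nat \<Rightarrow> nat"
  assumes k: "k > 0" and e: "bij_betw e {..<n} I" and p: "\<And>i. i \<in> I \<Longrightarrow> 0 \<le> p i \<and> p i \<le> 1"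
  shows "\<exists>q. (\<forall>i\<in>I. 0 \<le> q i \<and> q i \<le> 1 \<and> (\<exists>m::int. q i = real_of_int m / real k)) \<and>
    (\<forall>u v. v \<le> n \<longrightarrow> \<bar>\<Sum>t\<in>{u..<v}. p (e t) - q (e t)\<bar> \<le> 1 / real k)"
proof -
  define A where "A t = p (e t)" for t
  define q where "q i = round_seq k A (inv_into {..<n} e i)" for i
  have qe: "q (e t) = round_seq k A t" if "t < n" for t
    using bij_betw_inv_into_left[OF e] that by (simp add: q_def)
  have "0 \<le> q i \<and> q i \<le> 1 \<and> (\<exists>m::int. q i = real_of_int m / real k)" if "i \<in> I" for i
    using round_seq_unit[OF k] round_seq_on_grid p[OF that] bij_betw_inv_into_right[OF e that]
    by (simp add: q_def A_def)
  moreover have "\<bar>\<Sum>t\<in>{u..<v}. p (e t) - q (e t)\<bar> \<le> 1 / real k" if "v \<le> n" for u v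
  proof -
    have "(\<Sum>t\<in>{u..<v}. p (e t) - q (e t)) = (\<Sum>t\<in>{u..<v}. A t - round_seq k A t)"
      using that by (intro sum.cong) (auto simp: qe A_def)
    then show ?thesis using round_seq_interval_sum[OF k] by simp
  qed
  ultimately show ?thesis by blast
qed

text \<open>For \<open>k \<ge> 16\<close> the estimates give \<open>O(1/k)\<close>, which is below \<open>194/\<surd>k\<close>; for smaller \<open>k\<close>
  the trivial bound \<open>1\<close> suffices.\<close>
lemma tv_dist_sorted_rounding:
  fixes e :: "nat \<Rightarrow> nat" and p q :: "nat \<Rightarrow> real" and k :: nat
  assumes k: "k > 0" and e: "bij_betw e {..<n} I"
    and p: "\<And>i. i \<in> I \<Longrightarrow> 0 \<le> p i \<and> p i \<le> 1" and q: "\<And>i. i \<in> I \<Longrightarrow> 0 \<le> q i \<and> q i \<le> 1"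
    and partial: "\<And>u v. v \<le> n \<Longrightarrow> \<bar>\<Sum>t\<in>{u..<v}. p (e t) - q (e t)\<bar> \<le> 1 / real k"
    and sorted: "\<And>s t. s \<le> t \<Longrightarrow> t < n \<Longrightarrow> p (e s) \<le> p (e t)"
    and J: "J = I \<or> (\<exists>j\<in>I. J = I - {j})"
  shows "tv_dist (indicator_sum_pmf p J) (indicator_sum_pmf q J) \<le> 194 / sqrt (real k)"
proof (cases "real k \<ge> 16")
  case False
  have "finite J" using J e bij_betw_finite by blast
  then have "tv_dist (indicator_sum_pmf p J) (indicator_sum_pmf q J) \<le> 1"
    using J p q by (intro tv_dist_le_1) auto
  moreover have "sqrt (real k) < 4" using False real_sqrt_less_iff[of "real k" 16] by simp
  then have "1 \<le> 194 / sqrt (real k)" using k by (simp add: field_simps)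
  ultimately show ?thesis by linarith
next
  case True
  have close: "\<bar>p (e t) - q (e t)\<bar> \<le> 1 / real k" if "t < n" for t
    using partial[of "Suc t" t] that by simp
  have "tv_dist (indicator_sum_pmf p J) (indicator_sum_pmf q J) \<le> 194 * (1 / real k)"
    using J
  proof
    assume "J = I"
    then show ?thesis
      using tv_dist_sorted_enumeration[OF e p q True close partial _ _ sorted] True
        divide_right_mono[of 97 194 "real k"] by simp
  next
    assume "\<exists>j\<in>I. J = I - {j}"
    then show ?thesis
      using tv_dist_sorted_enumeration_delete[OF e _ p q True close partial _ _ sorted] True by auto
  qed
  also have "\<dots> \<le> 194 / sqrt (real k)"
  proof -
    have "sqrt (real k) \<le> real k"
      using k by (intro real_le_lsqrt) (auto simp: power2_eq_square)
    then show ?thesis using k by (simp add: divide_left_mono)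
  qed
  finally show ?thesis .
qed

theorem theorem2:
  shows "\<exists>C::real. C > 0 \<and>
    (\<forall>(n::nat) (k::nat) (p::nat \<Rightarrow> real). n > 0 \<longrightarrow> k > 0 \<longrightarrow>
      (\<forall>i\<in>{1..n}. 0 \<le> p i \<and> p i \<le> 1) \<longrightarrow>
      (\<exists>q::nat \<Rightarrow> real.
         (\<forall>i\<in>{1..n}. 0 \<le> q i \<and> q i \<le> 1) \<and>
         (\<forall>i\<in>{1..n}. \<bar>q i - p i\<bar> \<le> C / real k) \<and>
         (\<forall>i\<in>{1..n}. \<exists>m::int. q i = real_of_int m / real k) \<and>
         tv_dist (indicator_sum_pmf p {1..n}) (indicator_sum_pmf q {1..n}) \<le> C / sqrt (real k) \<and>
         (\<forall>j\<in>{1..n}. tv_dist (indicator_sum_pmf p ({1..n} - {j}))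
                                (indicator_sum_pmf q ({1..n} - {j})) \<le> C / sqrt (real k))))"
proof (intro exI[of _ "194::real"] conjI allI impI)
  fix n k :: nat and p :: "nat \<Rightarrow> real"
  assume "n > 0" and k: "k > 0" and p: "\<forall>i\<in>{1..n}. 0 \<le> p i \<and> p i \<le> 1"
  obtain e where e: "bij_betw e {..<n} {1..n}"
    and sorted: "\<And>s t. s \<le> t \<Longrightarrow> t < n \<Longrightarrow> p (e s) \<le> p (e t)"
    using sorted_enumeration[of "{1..n}" p] by auto
  obtain q where q: "\<forall>i\<in>{1..n}. 0 \<le> q i \<and> q i \<le> 1 \<and> (\<exists>m::int. q i = real_of_int m / real k)"
    and partial: "\<forall>u v. v \<le> n \<longrightarrow> \<bar>\<Sum>t\<in>{u..<v}. p (e t) - q (e t)\<bar> \<le> 1 / real k"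
    using sorted_rounding[OF k e] p by blast
  have tv: "tv_dist (indicator_sum_pmf p J) (indicator_sum_pmf q J) \<le> 194 / sqrt (real k)"
    if "J = {1..n} \<or> (\<exists>j\<in>{1..n}. J = {1..n} - {j})" for J
    using p q partial by (intro tv_dist_sorted_rounding[where p = p and q = q, OF k e _ _ _ sorted that]) auto
  have "\<bar>q i - p i\<bar> \<le> 194 / real k" if i: "i \<in> {1..n}" for i
  proof -
    obtain t where "t < n" "e t = i"
      using bij_betw_imp_surj_on[OF e] i by (metis imageE lessThan_iff)
    then have "\<bar>q i - p i\<bar> \<le> 1 / real k" using partial[rule_format, of "Suc t" t] by simp
    also have "\<dots> \<le> 194 / real k" by (simp add: divide_right_mono)
    finally show ?thesis .
  qed
  then show "\<exists>q. (\<forall>i\<in>{1..n}. 0 \<le> q i \<and> q i \<le> 1) \<and> (\<forall>i\<in>{1..n}. \<bar>q i - p i\<bar> \<le> 194 / real k) \<and>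
      (\<forall>i\<in>{1..n}. \<exists>m::int. q i = real_of_int m / real k) \<and>
      tv_dist (indicator_sum_pmf p {1..n}) (indicator_sum_pmf q {1..n}) \<le> 194 / sqrt (real k) \<and>
      (\<forall>j\<in>{1..n}. tv_dist (indicator_sum_pmf p ({1..n} - {j}))
        (indicator_sum_pmf q ({1..n} - {j})) \<le> 194 / sqrt (real k))"
    using q tv by (intro exI[of _ q]) auto
qed simp

end
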